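(* Let $T$ be a primed tableau of shape $\lambda/\mu$ over $X'_k$, $1\le i\le k-1$, $j=i+1$, with $e_i(T)\ne 0$, and let $y,p$ be the boxes chosen in the definition of $e_i$. Then either $p=y$ and $e_i(T)$ is obtained from $T$ by replacing the entry $j$ in $y$ by $i$, or $p\ne y$ and $e_i(T)$ is obtained by replacing the $j$ in $y$ by $j'$ and a $j'$ in $p$ by $i$. Moreover, $e_i(T)$ is again a primed tableau of shape $\lambda/\mu$.
   Context: Primed tableaux: Fix $k$. $X'_k=\{1'<1<2'<2<\dots<k'<k\}$; moving one step along this chain is "changing by a half unit" (e.g. $j\to j'\to i$ are decreases by a half unit when $j=i+1$). A primed tableau of (skew) shape $\lambda/\mu$ is a filling of the diagram (English convention) with letters of $X'_k$, rows and columns weakly increasing, at most one $i'$ per row and at most one $i$ per column, for every $i$. For a position $p$, $c(p)$ is its entry; a position that is not a box of $T$ is regarded as having content smaller than every letter when it lies to the left of or above the relevant box. The reading word of $T$ is the word of its unprimed entries, read row by row left to right, from the bottom row to the top row. Bracketing: fix $i$, $j=i+1$. In the subword of the reading word consisting of the letters $i$ and $j$, repeatedly pair (bracket) a letter $j$ with a letter $i$ occurring later such that no unbracketed letters lie between them, until the unbracketed letters form a word $i^aj^b$. Operator $e_i$: if there is no unbracketed $j$, $e_i(T)=0$. Otherwise let $y$ be the box corresponding to the leftmost unbracketed $j$; $W_y$ the position immediately left of $y$, $N_y$ the position immediately above $y$. Choose a box $p$: (1) if $c(W_y)\le i$ and $c(N_y)<i$, $p=y$; (2) if $c(W_y)=j'$,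 $p=W_y$; (3) if $c(W_y)\le i$ and $c(N_y)\in\{i,j'\}$, take the maximal ribbon starting at $N_y$ and extending by steps North and/or East consisting only of boxes with entries $i$ or $j'$, and let $p$ be its Northeast-most box. Then $e_i(T)$ is obtained from $T$ by decreasing $c(y)$ by a half unit and then decreasing $c(p)$ by a half unit. *)

theory Defs
  imports Main
begin

(* Letters of X'_k are encoded as positive naturals:
     i' |-> 2*i - 1,   i |-> 2*i.
   So 1' < 1 < 2' < 2 < ... < k' < k becomes 1 < 2 < ... < 2k, and a
   "half unit" step is a step of 1.  The value 0 is used for positions
   that are not boxes ("smaller than every letter"). *)

definition prm :: "nat \<Rightarrow> nat" where "prm i = 2 * i - 1"
definition unp :: "nat \<Rightarrow> nat" where "unp i = 2 * i"

(* partitions as weakly decreasing lists of row lengths; rows and columns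
   are indexed from 0, English convention: (r,c) = row r, column c *)
definition rowlen :: "nat list \<Rightarrow> nat \<Rightarrow> nat" where
  "rowlen xs r = (if r < length xs then xs ! r else 0)"

definition is_partition :: "nat list \<Rightarrow> bool" where
  "is_partition xs = (\<forall>r. Suc r < length xs \<longrightarrow> xs ! Suc r \<le> xs ! r)"

definition skew_shape :: "nat list \<Rightarrow> nat list \<Rightarrow> bool" where
  "skew_shape lam mu = (is_partition lam \<and> is_partition mu \<and> (\<forall>r. rowlen mu r \<le> rowlen lam r))"

definition boxes :: "nat list \<Rightarrow> nat list \<Rightarrow> (nat \<times> nat) set" where
  "boxes lam mu = {(r, c). rowlen mu r \<le> c \<and> c < rowlen lam r}"

definition primed_tableau :: "nat \<Rightarrow> nat list \<Rightarrow> nat list \<Rightarrow> (nat \<times> nat \<Rightarrow> nat) \<Rightarrow> bool" where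
  "primed_tableau k lam mu T =
     (skew_shape lam mu \<and>
      (\<forall>p. p \<notin> boxes lam mu \<longrightarrow> T p = 0) \<and>
      (\<forall>p \<in> boxes lam mu. 1 \<le> T p \<and> T p \<le> 2 * k) \<and>
      (\<forall>r c. (r, c) \<in> boxes lam mu \<and> (r, Suc c) \<in> boxes lam mu \<longrightarrow> T (r, c) \<le> T (r, Suc c)) \<and>
      (\<forall>r c. (r, c) \<in> boxes lam mu \<and> (Suc r, c) \<in> boxes lam mu \<longrightarrow> T (r, c) \<le> T (Suc r, c)) \<and>
      (\<forall>r c c'. (r, c) \<in> boxes lam mu \<and> (r, c') \<in> boxes lam mu \<and> T (r, c) = T (r, c')
                \<and> odd (T (r, c)) \<longrightarrow> c = c') \<and>
      (\<forall>r r' c. (r, c) \<in> boxes lam mu \<and> (r', c) \<in> boxes lam mu \<and> T (r, c) = T (r', c)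
                \<and> even (T (r, c)) \<longrightarrow> r = r'))"

(* contents of W_y and N_y (0 = not a box, smaller than every letter) *)
definition cW :: "(nat \<times> nat \<Rightarrow> nat) \<Rightarrow> nat \<times> nat \<Rightarrow> nat" where
  "cW T p = (case p of (r, c) \<Rightarrow> if c = 0 then 0 else T (r, c - 1))"
definition cN :: "(nat \<times> nat \<Rightarrow> nat) \<Rightarrow> nat \<times> nat \<Rightarrow> nat" where
  "cN T p = (case p of (r, c) \<Rightarrow> if r = 0 then 0 else T (r - 1, c))"

(* reading word, as the list of boxes carrying unprimed entries, read row by row
   left to right, from the bottom row to the top row *)
definition reading_boxes :: "nat list \<Rightarrow> nat list \<Rightarrow> (nat \<times> nat \<Rightarrow> nat) \<Rightarrow> (nat \<times> nat) list" where
  "reading_boxes lam mu T =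
     concat (map (\<lambda>r. filter (\<lambda>p. even (T p)) (map (\<lambda>c. (r, c)) [rowlen mu r..<rowlen lam r]))
                 (rev [0..<length lam]))"

(* Bracketing: scan the i/j-subword left to right; a letter j (flag True) is pushed,
   a letter i (flag False) is bracketed with the most recent unbracketed j, if any.
   The result is the list of unbracketed j's (most recent first). *)
fun unbracketed :: "('p \<times> bool) list \<Rightarrow> 'p list \<Rightarrow> 'p list" where
  "unbracketed [] st = st"
| "unbracketed ((p, True) # xs) st = unbracketed xs (p # st)"
| "unbracketed ((p, False) # xs) [] = unbracketed xs []"
| "unbracketed ((p, False) # xs) (q # st) = unbracketed xs st"

definition ij_subword :: "nat list \<Rightarrow> nat list \<Rightarrow> nat \<Rightarrow> (nat \<times> nat \<Rightarrow> nat) \<Rightarrow> ((nat \<times> nat) \<times> bool) list" where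
  "ij_subword lam mu i T =
     map (\<lambda>p. (p, T p = unp (Suc i)))
       (filter (\<lambda>p. T p = unp i \<or> T p = unp (Suc i)) (reading_boxes lam mu T))"

(* the box y of the leftmost unbracketed j, if any *)
definition e_box :: "nat list \<Rightarrow> nat list \<Rightarrow> nat \<Rightarrow> (nat \<times> nat \<Rightarrow> nat) \<Rightarrow> (nat \<times> nat) option" where
  "e_box lam mu i T =
     (let u = unbracketed (ij_subword lam mu i T) [] in if u = [] then None else Some (last u))"

inductive rib_reach :: "(nat \<times> nat \<Rightarrow> nat) \<Rightarrow> nat \<Rightarrow> nat \<times> nat \<Rightarrow> nat \<times> nat \<Rightarrow> bool"
  for T i s where
  start: "rib_reach T i s s"
| north: "rib_reach T i s (Suc r, c) \<Longrightarrow> T (r, c) \<in> {unp i, prm (Suc i)} \<Longrightarrow> rib_reach T i s (r, c)"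
| east: "rib_reach T i s (r, c) \<Longrightarrow> T (r, Suc c) \<in> {unp i, prm (Suc i)} \<Longrightarrow> rib_reach T i s (r, Suc c)"

definition rib_end :: "(nat \<times> nat \<Rightarrow> nat) \<Rightarrow> nat \<Rightarrow> nat \<times> nat \<Rightarrow> nat \<times> nat" where
  "rib_end T i s = (THE q. rib_reach T i s q \<and>
      (case q of (r, c) \<Rightarrow> \<not> (0 < r \<and> T (r - 1, c) \<in> {unp i, prm (Suc i)})
                         \<and> T (r, Suc c) \<notin> {unp i, prm (Suc i)}))"

definition p_box :: "(nat \<times> nat \<Rightarrow> nat) \<Rightarrow> nat \<Rightarrow> nat \<times> nat \<Rightarrow> nat \<times> nat" where
  "p_box T i y = (case y of (r, c) \<Rightarrow>
      if cW T y \<le> unp i \<and> cN T y < unp i then y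
      else if cW T y = prm (Suc i) then (r, c - 1)
      else if cW T y \<le> unp i \<and> cN T y \<in> {unp i, prm (Suc i)} then rib_end T i (r - 1, c)
      else y)"

(* e_i; None represents 0 *)
definition e_op :: "nat list \<Rightarrow> nat list \<Rightarrow> nat \<Rightarrow> (nat \<times> nat \<Rightarrow> nat) \<Rightarrow> (nat \<times> nat \<Rightarrow> nat) option" where
  "e_op lam mu i T = (case e_box lam mu i T of
      None \<Rightarrow> None
    | Some y \<Rightarrow> (let p = p_box T i y; T1 = T(y := T y - 1) in Some (T1(p := T1 p - 1))))"

end

theory Submission
  imports Defs
begin

text \<open>
  Let \<open>y\<close> carry the leftmost unbracketed \<open>j\<close>. The bracketing gives two facts: no \<open>j\<close> is read
  immediately before \<open>y\<close>, and every segment of the reading word starting right after \<open>y\<close>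
  contains at least as many \<open>j\<close>'s as \<open>i\<close>'s. The first, together with the column condition,
  bounds the letters west and north of \<open>y\<close> by \<open>j'\<close>, so the definition of \<open>e\<^sub>i\<close> falls into exactly three cases, and in each
  of them the tableau conditions only need to be checked at the one or two changed boxes.
  They could fail there only if an \<open>i\<close> sat north-west of a \<open>j'\<close> lying west of \<open>y\<close>, or
  if the ribbon ended in an \<open>i\<close>. Both are excluded by the second fact: sending each \<open>j\<close>
  read after \<open>y\<close> (up to a suitable \<open>i\<close>) to the box diagonally north-west of it hits
  \<open>i\<close>'s of the same segment injectively and misses one of them. The end of the ribbon is
  well defined because no box with entry \<open>i\<close> or \<open>j'\<close> has such entries both north and
  east of it, so the ribbon is a path.
\<close>

section \<open>Bracketing\<close>

lemma unbracketed_append: "unbracketed (xs @ ys) st = unbracketed ys (unbracketed xs st)"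
  by (induction xs st rule: unbracketed.induct) auto

lemma unbracketed_Cons_False: "unbracketed ((p, False) # xs) st = unbracketed xs (tl st)"
  by (cases st) auto

lemma unbracketed_shape:
  "\<exists>zs m. unbracketed xs st = zs @ drop m st \<and> set zs \<subseteq> {p. (p, True) \<in> set xs}"
proof (induction xs arbitrary: st)
  case Nil
  show ?case by (intro exI[of _ "[]"] exI[of _ 0]) simp
next
  case (Cons x xs)
  obtain p b where x: "x = (p, b)" by fastforce
  show ?case
  proof (cases b)
    case True
    obtain zs m where zs: "unbracketed xs (p # st) = zs @ drop m (p # st)"
      "set zs \<subseteq> {p. (p, True) \<in> set xs}"
      using Cons.IH by blast
    show ?thesis
    proof (cases m)
      case 0
      with zs x True show ?thesis by (intro exI[of _ "zs @ [p]"] exI[of _ 0]) auto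
    next
      case (Suc m')
      with zs x True show ?thesis by (intro exI[of _ zs] exI[of _ m']) auto
    qed
  next
    case False
    obtain zs m where "unbracketed xs (tl st) = zs @ drop m (tl st)"
      "set zs \<subseteq> {p. (p, True) \<in> set xs}"
      using Cons.IH by blast
    with x False show ?thesis
      by (intro exI[of _ zs] exI[of _ "Suc m"]) (auto simp: unbracketed_Cons_False drop_Suc)
  qed
qed

lemma set_unbracketed: "set (unbracketed xs st) \<subseteq> {p. (p, True) \<in> set xs} \<union> set st"
  using unbracketed_shape[of xs st] set_drop_subset by fastforce

lemma unbracketed_pops:
  "length (filter snd xs) + n < length (filter (\<lambda>x. \<not> snd x) xs) \<Longrightarrow>
   \<exists>zs m. n < m \<and> unbracketed xs st = zs @ drop m st \<and> set zs \<subseteq> {p. (p, True) \<in> set xs}"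
proof (induction xs arbitrary: n st)
  case (Cons x xs)
  obtain p b where x: "x = (p, b)" by fastforce
  show ?case
  proof (cases b)
    case True
    with Cons.prems x have "length (filter snd xs) + Suc n < length (filter (\<lambda>x. \<not> snd x) xs)"
      by simp
    then obtain zs m where m: "Suc n < m" and zs: "unbracketed xs (p # st) = zs @ drop m (p # st)"
      "set zs \<subseteq> {p. (p, True) \<in> set xs}"
      using Cons.IH by blast
    have "drop m (p # st) = drop (m - 1) st" using m by (cases m) auto
    then have "unbracketed (x # xs) st = zs @ drop (m - 1) st" using x True zs(1) by simp
    moreover have "set zs \<subseteq> {p. (p, True) \<in> set (x # xs)}" using zs(2) by auto
    moreover have "n < m - 1" using m by simp
    ultimately show ?thesis by blast
  next
    case False
    then have step: "unbracketed (x # xs) st = unbracketed xs (tl st)"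
      using x unbracketed_Cons_False by simp
    obtain zs m where "n \<le> m" "unbracketed xs (tl st) = zs @ drop m (tl st)"
      "set zs \<subseteq> {p. (p, True) \<in> set xs}"
    proof (cases n)
      case 0
      from unbracketed_shape[of xs "tl st"] obtain zs m
        where "unbracketed xs (tl st) = zs @ drop m (tl st)" "set zs \<subseteq> {p. (p, True) \<in> set xs}"
        by blast
      with 0 show ?thesis by (intro that) auto
    next
      case (Suc n')
      with Cons.prems x False have "length (filter snd xs) + n' < length (filter (\<lambda>x. \<not> snd x) xs)"
        by simp
      then obtain zs m where "n' < m" "unbracketed xs (tl st) = zs @ drop m (tl st)"
        "set zs \<subseteq> {p. (p, True) \<in> set xs}"
        using Cons.IH by blast
      with Suc show ?thesis by (intro that) auto
    qed
    then have "n < Suc m" "unbracketed (x # xs) st = zs @ drop (Suc m) st"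
      "set zs \<subseteq> {p. (p, True) \<in> set (x # xs)}"
      using step by (auto simp: drop_Suc)
    then show ?thesis by blast
  qed
qed simp

lemma unbracketed_balance:
  assumes "y \<in> set (unbracketed (pre @ (y, True) # seg @ rest) [])"
    and "y \<notin> fst ` set (pre @ seg @ rest)"
  shows "length (filter (\<lambda>x. \<not> snd x) seg) \<le> length (filter snd seg)"
proof (rule ccontr)
  let ?S = "unbracketed pre []"
  assume "\<not> ?thesis"
  then have "length (filter snd seg) + 0 < length (filter (\<lambda>x. \<not> snd x) seg)" by simp
  then obtain zs m where "0 < m" "unbracketed seg (y # ?S) = zs @ drop m (y # ?S)"
    "set zs \<subseteq> {p. (p, True) \<in> set seg}"
    using unbracketed_pops by blast
  then have "set (unbracketed seg (y # ?S)) \<subseteq> {p. (p, True) \<in> set seg} \<union> set ?S"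
    using set_drop_subset[of "m - 1" ?S] by (cases m) auto
  then have "set (unbracketed (pre @ (y, True) # seg @ rest) []) \<subseteq>
      {p. (p, True) \<in> set rest} \<union> {p. (p, True) \<in> set seg} \<union> {p. (p, True) \<in> set pre}"
    using set_unbracketed[of rest] set_unbracketed[of pre "[]"]
    by (fastforce simp: unbracketed_append)
  with assms show False by force
qed

lemma last_unbracketed_after_adjacent_push:
  assumes "y \<in> set (unbracketed (pre @ (w, True) # (y, True) # post) [])"
    and "y \<notin> fst ` set (pre @ (w, True) # post)"
  shows "last (unbracketed (pre @ (w, True) # (y, True) # post) []) \<noteq> y"
proof -
  let ?S = "unbracketed pre []"
  obtain zs m where u: "unbracketed (pre @ (w, True) # (y, True) # post) [] = zs @ drop m (y # w # ?S)"
    and zs: "set zs \<subseteq> {p. (p, True) \<in> set post}"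
    using unbracketed_shape[of post "y # w # ?S"] by (auto simp: unbracketed_append)
  have y_new: "y \<notin> set (w # ?S)"
    using set_unbracketed[of pre "[]"] assms(2) by force
  have "y \<notin> set zs" using zs assms(2) by force
  moreover have "y \<notin> set (drop m (y # w # ?S))" if "0 < m"
    using that y_new set_drop_subset[of "m - 1" "w # ?S"] by (cases m) auto
  ultimately have "m = 0" using assms(1) u by auto
  with u have "last (unbracketed (pre @ (w, True) # (y, True) # post) []) = last (w # ?S)" by simp
  moreover have "last (w # ?S) \<in> set (w # ?S)" by (rule last_in_set) simp
  ultimately show ?thesis using y_new by auto
qed

section \<open>Reading order\<close>

lemma takeWhile_eq_filter_if_sorted:
  assumes "sorted_wrt R xs" "\<And>a b. R a b \<Longrightarrow> P b \<Longrightarrow> P a"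
  shows "takeWhile P xs = filter P xs"
  using assms(1)
proof (induction xs)
  case (Cons x xs)
  show ?case
  proof (cases "P x")
    case False
    with Cons.prems assms(2) have "\<forall>z\<in>set xs. \<not> P z" by auto
    with False show ?thesis by simp
  qed (use Cons in simp)
qed simp

lemma sorted_wrt_adjacent:
  assumes "sorted_wrt R xs" "asymp R" "w \<in> set xs" "y \<in> set xs" "R w y"
    and "\<And>z. \<not> (R w z \<and> R z y)"
  shows "\<exists>pre post. xs = pre @ w # y # post"
proof -
  obtain pre post where xs: "xs = pre @ y # post" using assms(4) by (meson split_list)
  have "w \<notin> set post"
    using assms(1,2,5) xs by (auto simp: sorted_wrt_append dest: asympD)
  moreover have "w \<noteq> y" using assms(2,5) by (auto dest: asympD)
  ultimately have "w \<in> set pre" using assms(3) xs by auto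
  then obtain pre' v where pre: "pre = pre' @ [v]" by (metis empty_iff list.set(1) rev_exhaust)
  have "v = w"
  proof (rule ccontr)
    assume "v \<noteq> w"
    with \<open>w \<in> set pre\<close> have "R w v" "R v y"
      using assms(1) xs pre by (auto simp: sorted_wrt_append)
    with assms(6) show False by blast
  qed
  with xs pre show ?thesis by auto
qed

lemma distinct_if_sorted_irrefl: "sorted_wrt R xs \<Longrightarrow> (\<And>x. \<not> R x x) \<Longrightarrow> distinct xs"
  by (induction xs) auto

definition read_before :: "nat \<times> nat \<Rightarrow> nat \<times> nat \<Rightarrow> bool" where
  "read_before p q \<longleftrightarrow> fst q < fst p \<or> (fst p = fst q \<and> snd p < snd q)"

lemma read_before_irrefl: "\<not> read_before p p"
  by (simp add: read_before_def)

lemma read_before_trans: "read_before p q \<Longrightarrow> read_before q s \<Longrightarrow> read_before p s"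
  by (auto simp: read_before_def)

lemma asymp_read_before: "asymp read_before"
  by (rule asympI) (auto simp: read_before_def)

lemma sorted_reading_boxes: "sorted_wrt read_before (reading_boxes lam mu T)"
proof -
  have "sorted_wrt read_before
      (concat (map (\<lambda>r. filter (P r) (map (\<lambda>c. (r, c)) [a r..<b r])) (rev [0..<n])))"
    for P a b n
  proof (induction n)
    case (Suc n)
    have "sorted_wrt read_before (map (\<lambda>c. (n, c)) [a n..<b n])"
      unfolding sorted_wrt_map
      by (rule sorted_wrt_mono_rel[OF _ sorted_wrt_upt]) (simp add: read_before_def)
    then have "sorted_wrt read_before (filter (P n) (map (\<lambda>c. (n, c)) [a n..<b n]))"
      by (rule sorted_wrt_filter)
    moreover have "read_before p q"
      if "p \<in> set (filter (P n) (map (\<lambda>c. (n, c)) [a n..<b n]))"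
        "q \<in> set (concat (map (\<lambda>r. filter (P r) (map (\<lambda>c. (r, c)) [a r..<b r])) (rev [0..<n])))"
      for p q
      using that by (auto simp: read_before_def)
    ultimately show ?case using Suc.IH by (simp add: sorted_wrt_append)
  qed simp
  then show ?thesis unfolding reading_boxes_def .
qed

lemma set_reading_boxes: "set (reading_boxes lam mu T) = {p \<in> boxes lam mu. even (T p)}"
  by (auto simp: reading_boxes_def boxes_def rowlen_def split: if_splits)

definition ij_boxes :: "nat list \<Rightarrow> nat list \<Rightarrow> nat \<Rightarrow> (nat \<times> nat \<Rightarrow> nat) \<Rightarrow> (nat \<times> nat) list" where
  "ij_boxes lam mu i T = filter (\<lambda>p. T p = unp i \<or> T p = unp (Suc i)) (reading_boxes lam mu T)"

lemma ij_subword_eq: "ij_subword lam mu i T = map (\<lambda>p. (p, T p = unp (Suc i))) (ij_boxes lam mu i T)"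
  by (simp add: ij_subword_def ij_boxes_def)

lemma sorted_ij_boxes: "sorted_wrt read_before (ij_boxes lam mu i T)"
  unfolding ij_boxes_def by (rule sorted_wrt_filter[OF sorted_reading_boxes])

lemma distinct_ij_boxes: "distinct (ij_boxes lam mu i T)"
  using sorted_ij_boxes[of lam mu i T] by (rule distinct_if_sorted_irrefl) (rule read_before_irrefl)

lemma set_ij_boxes:
  "set (ij_boxes lam mu i T) = {p \<in> boxes lam mu. T p = unp i \<or> T p = unp (Suc i)}"
  by (auto simp: ij_boxes_def set_reading_boxes unp_def)

lemma e_box_last:
  assumes "e_box lam mu i T = Some y"
  shows "y \<in> set (unbracketed (ij_subword lam mu i T) [])"
    and "last (unbracketed (ij_subword lam mu i T) []) = y"
  using assms unfolding e_box_def Let_def by (auto split: if_splits)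

lemma e_box_entry:
  assumes "e_box lam mu i T = Some y"
  shows "y \<in> boxes lam mu" and "T y = unp (Suc i)"
proof -
  have "(y, True) \<in> set (ij_subword lam mu i T)"
    using set_unbracketed e_box_last(1)[OF assms] by fastforce
  then show "y \<in> boxes lam mu" "T y = unp (Suc i)"
    unfolding ij_subword_eq by (auto simp: set_ij_boxes)
qed

definition between_boxes ::
  "nat list \<Rightarrow> nat list \<Rightarrow> (nat \<times> nat \<Rightarrow> nat) \<Rightarrow> nat \<Rightarrow> nat \<times> nat \<Rightarrow> nat \<times> nat \<Rightarrow> (nat \<times> nat) set"
  where "between_boxes lam mu T v y t =
    {z \<in> boxes lam mu. read_before y z \<and> (z = t \<or> read_before z t) \<and> T z = v}"

lemma e_box_balance:
  assumes "e_box lam mu i T = Some y"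
  shows "card (between_boxes lam mu T (unp i) y t) \<le> card (between_boxes lam mu T (unp (Suc i)) y t)"
proof -
  let ?f = "\<lambda>p. (p, T p = unp (Suc i))"
  let ?P = "\<lambda>z. z = t \<or> read_before z t"
  have "y \<in> set (ij_boxes lam mu i T)" using e_box_entry[OF assms] by (simp add: set_ij_boxes)
  then obtain pre post where F: "ij_boxes lam mu i T = pre @ y # post" by (meson split_list)
  have sorted: "sorted_wrt read_before (pre @ y # post)" and dist: "distinct (pre @ y # post)"
    using sorted_ij_boxes[of lam mu i T] distinct_ij_boxes[of lam mu i T] F by simp_all
  define seg where "seg = takeWhile ?P post"
  define rest where "rest = dropWhile ?P post"
  have post: "post = seg @ rest" unfolding seg_def rest_def by simp
  have seg: "seg = filter ?P post" unfolding seg_def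
    using sorted by (intro takeWhile_eq_filter_if_sorted[where R = read_before])
      (auto simp: sorted_wrt_append intro: read_before_trans)
  have "z \<in> set post \<longleftrightarrow> z \<in> set (ij_boxes lam mu i T) \<and> read_before y z" for z
    using sorted asymp_read_before read_before_irrefl unfolding F
    by (auto simp: sorted_wrt_append dest: asympD)
  then have between: "between_boxes lam mu T v y t = {z \<in> set seg. T z = v}"
    if "v = unp i \<or> v = unp (Suc i)" for v
    using that unfolding between_boxes_def seg by (auto simp: set_ij_boxes)
  have "length (filter (\<lambda>x. \<not> snd x) (map ?f seg)) \<le> length (filter snd (map ?f seg))"
  proof (rule unbracketed_balance)
    show "y \<in> set (unbracketed (map ?f pre @ (y, True) # map ?f seg @ map ?f rest) [])"
      using e_box_last(1)[OF assms] e_box_entry(2)[OF assms] by (simp add: ij_subword_eq F post)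
    show "y \<notin> fst ` set (map ?f pre @ map ?f seg @ map ?f rest)" using dist post by auto
  qed
  moreover have "filter (\<lambda>z. T z \<noteq> unp (Suc i)) seg = filter (\<lambda>z. T z = unp i) seg"
    using set_ij_boxes[of lam mu i T] unfolding F seg by (intro filter_cong) (auto simp: unp_def)
  ultimately have "length (filter (\<lambda>z. T z = unp i) seg) \<le> length (filter (\<lambda>z. T z = unp (Suc i)) seg)"
    by (simp add: filter_map comp_def)
  moreover have "distinct seg" using dist post by simp
  ultimately show ?thesis by (simp add: between distinct_length_filter Collect_conj_eq Int_commute)
qed

lemma e_box_west_not_unprimed:
  assumes "e_box lam mu i T = Some (r, c)" "(r, c - 1) \<in> boxes lam mu" "0 < c"
  shows "T (r, c - 1) \<noteq> unp (Suc i)"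
proof
  let ?f = "\<lambda>p. (p, T p = unp (Suc i))"
  assume west: "T (r, c - 1) = unp (Suc i)"
  have "(r, c - 1) \<in> set (ij_boxes lam mu i T)" "(r, c) \<in> set (ij_boxes lam mu i T)"
    using assms(2) west e_box_entry[OF assms(1)] by (simp_all add: set_ij_boxes)
  moreover have "read_before (r, c - 1) (r, c)" "\<And>z. \<not> (read_before (r, c - 1) z \<and> read_before z (r, c))"
    using assms(3) by (auto simp: read_before_def)
  ultimately obtain pre post where F: "ij_boxes lam mu i T = pre @ (r, c - 1) # (r, c) # post"
    using sorted_wrt_adjacent[OF sorted_ij_boxes asymp_read_before] by blast
  then have "distinct (pre @ (r, c - 1) # (r, c) # post)" using distinct_ij_boxes by metis
  then have
    "last (unbracketed (map ?f pre @ ((r, c - 1), True) # ((r, c), True) # map ?f post) []) \<noteq> (r, c)"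
    using e_box_last(1)[OF assms(1)] e_box_entry(2)[OF assms(1)] west
    by (intro last_unbracketed_after_adjacent_push) (auto simp: ij_subword_eq F)
  with e_box_last(2)[OF assms(1)] e_box_entry(2)[OF assms(1)] west show False
    by (simp add: ij_subword_eq F)
qed

section \<open>Ribbons\<close>

definition rib_step :: "(nat \<times> nat \<Rightarrow> nat) \<Rightarrow> nat \<Rightarrow> nat \<times> nat \<Rightarrow> nat \<times> nat \<Rightarrow> bool" where
  "rib_step T i q q' \<longleftrightarrow> T q' \<in> {unp i, prm (Suc i)} \<and>
     (fst q = Suc (fst q') \<and> snd q' = snd q \<or> fst q' = fst q \<and> snd q' = Suc (snd q))"

lemma rib_reach_iff: "rib_reach T i s q \<longleftrightarrow> (rib_step T i)\<^sup>*\<^sup>* s q"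
proof
  show "rib_reach T i s q \<Longrightarrow> (rib_step T i)\<^sup>*\<^sup>* s q"
    by (induction rule: rib_reach.induct)
       (auto simp: rib_step_def intro: rtranclp.rtrancl_into_rtrancl)
  show "(rib_step T i)\<^sup>*\<^sup>* s q \<Longrightarrow> rib_reach T i s q"
  proof (induction rule: rtranclp_induct)
    case (step q q')
    then show ?case
      by (cases q; cases q') (auto simp: rib_step_def intro: rib_reach.intros)
  qed (rule rib_reach.start)
qed

lemma rib_step_exists_iff:
  "(\<exists>q'. rib_step T i (r, c) q') \<longleftrightarrow>
     0 < r \<and> T (r - 1, c) \<in> {unp i, prm (Suc i)} \<or> T (r, Suc c) \<in> {unp i, prm (Suc i)}"
proof
  assume "\<exists>q'. rib_step T i (r, c) q'"
  then obtain a b where "rib_step T i (r, c) (a, b)" by auto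
  then show "0 < r \<and> T (r - 1, c) \<in> {unp i, prm (Suc i)} \<or> T (r, Suc c) \<in> {unp i, prm (Suc i)}"
    by (auto simp: rib_step_def)
next
  assume "0 < r \<and> T (r - 1, c) \<in> {unp i, prm (Suc i)} \<or> T (r, Suc c) \<in> {unp i, prm (Suc i)}"
  then have "rib_step T i (r, c) (r - 1, c) \<or> rib_step T i (r, c) (r, Suc c)"
    by (auto simp: rib_step_def)
  then show "\<exists>q'. rib_step T i (r, c) q'" by blast
qed

lemma rib_end_condition_iff:
  "(case q of (r, c) \<Rightarrow> \<not> (0 < r \<and> T (r - 1, c) \<in> {unp i, prm (Suc i)})
      \<and> T (r, Suc c) \<notin> {unp i, prm (Suc i)}) \<longleftrightarrow> (\<nexists>q'. rib_step T i q q')"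
  using rib_step_exists_iff[of T i "fst q" "snd q"] by (cases q) simp

lemma rib_reach_entry: "rib_reach T i s q \<Longrightarrow> T s \<in> {unp i, prm (Suc i)} \<Longrightarrow> T q \<in> {unp i, prm (Suc i)}"
  by (induction rule: rib_reach.induct) auto

lemma rib_reach_row_le: "rib_reach T i s q \<Longrightarrow> fst q \<le> fst s"
  by (induction rule: rib_reach.induct) auto

lemma rib_reach_crosses_row:
  "rib_reach T i s q \<Longrightarrow> fst q \<le> a \<Longrightarrow> a < fst s \<Longrightarrow>
   \<exists>c. rib_reach T i s (Suc a, c) \<and> rib_reach T i s (a, c)"
proof (induction rule: rib_reach.induct)
  case (north r c)
  then show ?case by (cases "a = r") (auto intro: rib_reach.north)
qed auto

section \<open>Primed tableaux\<close>

lemma rowlen_antimono: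
  assumes "is_partition xs" "r1 \<le> r2"
  shows "rowlen xs r2 \<le> rowlen xs r1"
  using assms(2)
proof (induction r2 rule: dec_induct)
  case (step n)
  have "rowlen xs (Suc n) \<le> rowlen xs n"
    using assms(1) unfolding rowlen_def is_partition_def by auto
  with step.IH show ?case by simp
qed simp

lemma mem_boxes_iff: "(r, c) \<in> boxes lam mu \<longleftrightarrow> rowlen mu r \<le> c \<and> c < rowlen lam r"
  by (simp add: boxes_def)

lemma finite_boxes: "finite (boxes lam mu)"
proof (rule finite_subset)
  show "boxes lam mu \<subseteq> (SIGMA r:{..<length lam}. {..<lam ! r})"
    by (auto simp: boxes_def rowlen_def split: if_splits)
qed auto

lemma skew_shape_convex:
  assumes "skew_shape lam mu"
    and "(r1, c1) \<in> boxes lam mu" "(r2, c2) \<in> boxes lam mu"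
    and "r1 \<le> r" "r \<le> r2" "c1 \<le> c" "c \<le> c2"
  shows "(r, c) \<in> boxes lam mu"
proof -
  have "rowlen mu r \<le> rowlen mu r1" "rowlen lam r2 \<le> rowlen lam r"
    using assms(1,4,5) rowlen_antimono unfolding skew_shape_def by blast+
  with assms(2,3,6,7) show ?thesis unfolding mem_boxes_iff by linarith
qed

definition tableau_at :: "nat \<Rightarrow> nat list \<Rightarrow> nat list \<Rightarrow> (nat \<times> nat \<Rightarrow> nat) \<Rightarrow> nat \<Rightarrow> nat \<Rightarrow> bool" where
  "tableau_at k lam mu T r c \<longleftrightarrow>
     1 \<le> T (r, c) \<and> T (r, c) \<le> 2 * k \<and>
     (0 < c \<longrightarrow> (r, c - 1) \<in> boxes lam mu \<longrightarrow> T (r, c - 1) \<le> T (r, c)) \<and>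
     ((r, Suc c) \<in> boxes lam mu \<longrightarrow> T (r, c) \<le> T (r, Suc c)) \<and>
     (0 < r \<longrightarrow> (r - 1, c) \<in> boxes lam mu \<longrightarrow> T (r - 1, c) \<le> T (r, c)) \<and>
     ((Suc r, c) \<in> boxes lam mu \<longrightarrow> T (r, c) \<le> T (Suc r, c)) \<and>
     (odd (T (r, c)) \<longrightarrow> (\<forall>x. (r, x) \<in> boxes lam mu \<longrightarrow> x \<noteq> c \<longrightarrow> T (r, x) \<noteq> T (r, c))) \<and>
     (even (T (r, c)) \<longrightarrow> (\<forall>a. (a, c) \<in> boxes lam mu \<longrightarrow> a \<noteq> r \<longrightarrow> T (a, c) \<noteq> T (r, c)))"

lemma tableau_at_row_odd:
  "tableau_at k lam mu T r c \<Longrightarrow> odd (T (r, c)) \<Longrightarrow> (r, x) \<in> boxes lam mu \<Longrightarrow> x \<noteq> c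
   \<Longrightarrow> T (r, x) \<noteq> T (r, c)"
  by (simp add: tableau_at_def)

lemma tableau_at_col_even:
  "tableau_at k lam mu T r c \<Longrightarrow> even (T (r, c)) \<Longrightarrow> (a, c) \<in> boxes lam mu \<Longrightarrow> a \<noteq> r
   \<Longrightarrow> T (a, c) \<noteq> T (r, c)"
  by (simp add: tableau_at_def)

locale tableau =
  fixes k :: nat and lam mu :: "nat list" and T :: "nat \<times> nat \<Rightarrow> nat"
  assumes primed: "primed_tableau k lam mu T"
begin

lemma shape: "skew_shape lam mu"
  using primed unfolding primed_tableau_def by (elim conjE)

lemma zero_outside: "q \<notin> boxes lam mu \<Longrightarrow> T q = 0"
  using primed unfolding primed_tableau_def by (elim conjE) blast

lemma box_if_nonzero: "T q \<noteq> 0 \<Longrightarrow> q \<in> boxes lam mu"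
  using zero_outside by (metis (mono_tags))

lemma entry_bounds: "q \<in> boxes lam mu \<Longrightarrow> 1 \<le> T q \<and> T q \<le> 2 * k"
  using primed unfolding primed_tableau_def by (elim conjE) blast

lemma row_step: "(r, c) \<in> boxes lam mu \<Longrightarrow> (r, Suc c) \<in> boxes lam mu \<Longrightarrow> T (r, c) \<le> T (r, Suc c)"
  using primed unfolding primed_tableau_def by (elim conjE) blast

lemma col_step: "(r, c) \<in> boxes lam mu \<Longrightarrow> (Suc r, c) \<in> boxes lam mu \<Longrightarrow> T (r, c) \<le> T (Suc r, c)"
  using primed unfolding primed_tableau_def by (elim conjE) blast

lemma row_odd_unique:
  "(r, c) \<in> boxes lam mu \<Longrightarrow> (r, c') \<in> boxes lam mu \<Longrightarrow> T (r, c) = T (r, c') \<Longrightarrow> odd (T (r, c)) \<Longrightarrow> c = c'"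
  using primed unfolding primed_tableau_def by (elim conjE) blast

lemma col_even_unique:
  "(r, c) \<in> boxes lam mu \<Longrightarrow> (r', c) \<in> boxes lam mu \<Longrightarrow> T (r, c) = T (r', c) \<Longrightarrow> even (T (r, c)) \<Longrightarrow> r = r'"
  using primed unfolding primed_tableau_def by (elim conjE) blast

lemma convex:
  "(r1, c1) \<in> boxes lam mu \<Longrightarrow> (r2, c2) \<in> boxes lam mu \<Longrightarrow> r1 \<le> r \<Longrightarrow> r \<le> r2 \<Longrightarrow> c1 \<le> c \<Longrightarrow> c \<le> c2
   \<Longrightarrow> (r, c) \<in> boxes lam mu"
  using primed skew_shape_convex unfolding primed_tableau_def by blast

lemma row_mono:
  assumes "(r, c1) \<in> boxes lam mu" "(r, c2) \<in> boxes lam mu" "c1 \<le> c2"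
  shows "T (r, c1) \<le> T (r, c2)"
  using assms(3,2)
proof (induction c2 rule: dec_induct)
  case (step c)
  have "(r, c) \<in> boxes lam mu" using convex[OF assms(1) step.prems] step.hyps by simp
  with step show ?case using row_step[of r c] by simp
qed simp

lemma col_mono:
  assumes "(r1, c) \<in> boxes lam mu" "(r2, c) \<in> boxes lam mu" "r1 \<le> r2"
  shows "T (r1, c) \<le> T (r2, c)"
  using assms(3,2)
proof (induction r2 rule: dec_induct)
  case (step r)
  have "(r, c) \<in> boxes lam mu" using convex[OF assms(1) step.prems] step.hyps by simp
  with step show ?case using col_step[of r c] by simp
qed simp

lemma above_unprimed:
  assumes "T (Suc r, c) = unp j" "(r, c) \<in> boxes lam mu" "1 \<le> j"
  shows "T (r, c) < unp j"
proof -
  have below: "(Suc r, c) \<in> boxes lam mu"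
    using assms(1,3) by (intro box_if_nonzero) (simp add: unp_def)
  have "T (r, c) \<noteq> unp j"
    using col_even_unique[OF assms(2) below] assms(1) by (auto simp: unp_def)
  with col_step[OF assms(2) below] assms(1) show ?thesis by simp
qed

lemma northwest_of_unprimed:
  assumes "T (Suc r, c) = unp (Suc i)" "(r, c - 1) \<in> boxes lam mu" "0 < c"
  shows "T (r, c - 1) \<le> unp i"
proof -
  have below: "(Suc r, c) \<in> boxes lam mu"
    using assms(1) by (intro box_if_nonzero) (simp add: unp_def)
  have north: "(r, c) \<in> boxes lam mu" using convex[OF assms(2) below] by simp
  have "T (r, c) \<le> prm (Suc i)"
    using above_unprimed[OF assms(1) north] by (simp add: unp_def prm_def)
  moreover have le: "T (r, c - 1) \<le> T (r, c)" using row_mono[OF assms(2) north] by simp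
  moreover have "T (r, c - 1) \<noteq> prm (Suc i)"
  proof
    assume west: "T (r, c - 1) = prm (Suc i)"
    with calculation have "T (r, c - 1) = T (r, c)" by simp
    moreover have "odd (T (r, c - 1))" using west by (simp add: prm_def)
    ultimately have "c - 1 = c" using row_odd_unique[OF assms(2) north] by simp
    with assms(3) show False by simp
  qed
  ultimately show ?thesis by (simp add: unp_def prm_def)
qed

lemma ribbon_no_fork:
  assumes "1 \<le> i" "(r, c) \<in> boxes lam mu" "T (r, c) \<in> {unp i, prm (Suc i)}"
  shows "\<not> (0 < r \<and> T (r - 1, c) \<in> {unp i, prm (Suc i)} \<and> T (r, Suc c) \<in> {unp i, prm (Suc i)})"
proof
  assume fork: "0 < r \<and> T (r - 1, c) \<in> {unp i, prm (Suc i)} \<and> T (r, Suc c) \<in> {unp i, prm (Suc i)}"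
  then have north: "(r - 1, c) \<in> boxes lam mu" and east: "(r, Suc c) \<in> boxes lam mu"
    using assms(1) by (auto intro!: box_if_nonzero simp: unp_def prm_def)
  have north_le: "T (r - 1, c) \<le> T (r, c)" using col_mono[OF north assms(2)] by simp
  have east_ge: "T (r, c) \<le> T (r, Suc c)" using row_step[OF assms(2) east] .
  show False
  proof (cases "T (r, c) = unp i")
    case True
    with fork north_le have eq: "T (r - 1, c) = T (r, c)" by (auto simp: unp_def prm_def)
    moreover have "even (T (r - 1, c))" using eq True by (simp add: unp_def)
    ultimately have "r - 1 = r" using col_even_unique[OF north assms(2)] by simp
    moreover from fork have "0 < r" by simp
    ultimately show False by simp
  next
    case False
    with assms(3) have odd_entry: "T (r, c) = prm (Suc i)" by simp
    with fork east_ge have eq: "T (r, c) = T (r, Suc c)" by (auto simp: unp_def prm_def)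
    moreover have "odd (T (r, c))" using odd_entry by (simp add: prm_def)
    ultimately have "c = Suc c" using row_odd_unique[OF assms(2) east] by simp
    then show False by simp
  qed
qed

lemma rib_step_deterministic:
  assumes "1 \<le> i" "q \<in> boxes lam mu" "T q \<in> {unp i, prm (Suc i)}"
    and "rib_step T i q q1" "rib_step T i q q2"
  shows "q1 = q2"
proof -
  obtain r c where q: "q = (r, c)" by fastforce
  have step_cases: "q' = (r - 1, c) \<and> 0 < r \<and> T (r - 1, c) \<in> {unp i, prm (Suc i)}
      \<or> q' = (r, Suc c) \<and> T (r, Suc c) \<in> {unp i, prm (Suc i)}"
    if "rib_step T i q q'" for q'
    using that unfolding q rib_step_def by (cases q') auto
  from step_cases[OF assms(4)] step_cases[OF assms(5)] ribbon_no_fork[OF assms(1-3)[unfolded q]]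
  show ?thesis by auto
qed

lemma rib_reach_box:
  assumes "1 \<le> i" "rib_reach T i s q" "T s \<in> {unp i, prm (Suc i)}"
  shows "q \<in> boxes lam mu"
proof (rule box_if_nonzero)
  show "T q \<noteq> 0" using rib_reach_entry[OF assms(2,3)] assms(1) by (auto simp: unp_def prm_def)
qed

lemma rib_reach_comparable:
  assumes "1 \<le> i" "T s \<in> {unp i, prm (Suc i)}"
    and "(rib_step T i)\<^sup>*\<^sup>* s q" "(rib_step T i)\<^sup>*\<^sup>* s q'"
  shows "(rib_step T i)\<^sup>*\<^sup>* q q' \<or> (rib_step T i)\<^sup>*\<^sup>* q' q"
  using assms(4)
proof (induction rule: rtranclp_induct)
  case base
  from assms(3) show ?case by simp
next
  case (step q' q'')
  from step.IH show ?case
  proof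
    assume "(rib_step T i)\<^sup>*\<^sup>* q q'"
    with step.hyps(2) show ?case by (simp add: rtranclp.rtrancl_into_rtrancl)
  next
    assume "(rib_step T i)\<^sup>*\<^sup>* q' q"
    then show ?case
    proof (cases rule: converse_rtranclpE)
      case base
      with step.hyps(2) show ?thesis by auto
    next
      case (step z)
      have reach: "rib_reach T i s q'" using \<open>(rib_step T i)\<^sup>*\<^sup>* s q'\<close> by (simp add: rib_reach_iff)
      have "z = q''"
        by (rule rib_step_deterministic[OF assms(1) rib_reach_box[OF assms(1) reach assms(2)]
              rib_reach_entry[OF reach assms(2)] step(1) \<open>rib_step T i q' q''\<close>])
      with step(2) show ?thesis by simp
    qed
  qed
qed

lemma rib_end_exists:
  assumes "1 \<le> i" "T s \<in> {unp i, prm (Suc i)}"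
  shows "\<exists>q. rib_reach T i s q \<and> (\<nexists>q'. rib_step T i q q')"
proof -
  let ?R = "{q. rib_reach T i s q}"
  let ?d = "\<lambda>q :: nat \<times> nat. int (snd q) - int (fst q)"
  have "finite ?R"
    using rib_reach_box[OF assms(1) _ assms(2)] by (intro finite_subset[OF _ finite_boxes]) auto
  moreover have "s \<in> ?R" by (simp add: rib_reach.start)
  ultimately obtain q where q: "q \<in> ?R" "?d q = Max (?d ` ?R)"
    using Max_in[of "?d ` ?R"] by fastforce
  have "\<nexists>q'. rib_step T i q q'"
  proof
    assume "\<exists>q'. rib_step T i q q'"
    then obtain q' where step: "rib_step T i q q'" ..
    with q(1) have "q' \<in> ?R" by (simp add: rib_reach_iff rtranclp.rtrancl_into_rtrancl)
    with \<open>finite ?R\<close> have "?d q' \<le> ?d q" by (simp add: q(2))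
    with step show False by (auto simp: rib_step_def)
  qed
  with q(1) show ?thesis by blast
qed

lemma rib_end_spec:
  assumes "1 \<le> i" "T s \<in> {unp i, prm (Suc i)}"
  shows "rib_reach T i s (rib_end T i s)" and "\<nexists>q'. rib_step T i (rib_end T i s) q'"
proof -
  let ?is_end = "\<lambda>q. rib_reach T i s q \<and> (\<nexists>q'. rib_step T i q q')"
  have "rib_end T i s = (THE q. ?is_end q)"
    unfolding rib_end_def rib_end_condition_iff ..
  moreover have "q1 = q2" if "?is_end q1" "?is_end q2" for q1 q2
  proof -
    have no_path: "q = q'" if "(rib_step T i)\<^sup>*\<^sup>* q q'" "\<nexists>q''. rib_step T i q q''" for q q'
      using that by (cases rule: converse_rtranclpE) auto
    from that rib_reach_comparable[OF assms, of q1 q2] show ?thesis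
      by (auto simp: rib_reach_iff dest: no_path)
  qed
  ultimately have "rib_end T i s = (THE q. ?is_end q)" "\<exists>!q. ?is_end q"
    using rib_end_exists[OF assms] by blast+
  then show "rib_reach T i s (rib_end T i s)" "\<nexists>q'. rib_step T i (rib_end T i s) q'"
    using theI'[of ?is_end] by simp_all
qed

lemma primed_tableau_update:
  assumes D: "D \<subseteq> boxes lam mu" and same: "\<And>q. q \<notin> D \<Longrightarrow> T' q = T q"
    and local: "\<And>r c. (r, c) \<in> D \<Longrightarrow> tableau_at k lam mu T' r c"
  shows "primed_tableau k lam mu T'"
  unfolding primed_tableau_def
proof (intro conjI allI impI ballI)
  show "skew_shape lam mu" by (rule shape)
  show "T' q = 0" if "q \<notin> boxes lam mu" for q
    using that D same[of q] zero_outside[of q] by auto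
  show "1 \<le> T' q" "T' q \<le> 2 * k" if "q \<in> boxes lam mu" for q
    using that local[of "fst q" "snd q"] same[of q] entry_bounds[of q]
    by (cases "q \<in> D"; simp add: tableau_at_def)+
  show "T' (r, c) \<le> T' (r, Suc c)" if "(r, c) \<in> boxes lam mu \<and> (r, Suc c) \<in> boxes lam mu" for r c
   
      using that local[of r c] local[of r "Suc c"] same[of "(r, c)"] same[of "(r, Suc c)"]
        row_step[of r c]
    by (cases "(r, c) \<in> D"; cases "(r, Suc c) \<in> D") (auto simp: tableau_at_def)
  show "T' (r, c) \<le> T' (Suc r, c)" if "(r, c) \<in> boxes lam mu \<and> (Suc r, c) \<in> boxes lam mu" for r c
   
      using that local[of r c] local[of "Suc r" c] same[of "(r, c)"] same[of "(Suc r, c)"]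
        col_step[of r c]
    by (cases "(r, c) \<in> D"; cases "(Suc r, c) \<in> D") (auto simp: tableau_at_def)
  show "c = c'"
    if h: "(r, c) \<in> boxes lam mu \<and> (r, c') \<in> boxes lam mu \<and> T' (r, c) = T' (r, c') \<and> odd (T' (r, c))"
    for r c c'
  proof (rule ccontr)
    assume "c \<noteq> c'"
    moreover have "(r, c) \<notin> D" using h \<open>c \<noteq> c'\<close> tableau_at_row_odd[OF local, of r c c'] by auto
    moreover have "(r, c') \<notin> D" using h \<open>c \<noteq> c'\<close> tableau_at_row_odd[OF local, of r c' c] by auto
    ultimately show False using h same row_odd_unique by metis
  qed
  show "r = r'"
    if h: "(r, c) \<in> boxes lam mu \<and> (r', c) \<in> boxes lam mu \<and> T' (r, c) = T' (r', c) \<and> even (T' (r, c))"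
    for r r' c
  proof (rule ccontr)
    assume "r \<noteq> r'"
    moreover have "(r, c) \<notin> D" using h \<open>r \<noteq> r'\<close> tableau_at_col_even[OF local, of r c r'] by auto
    moreover have "(r', c) \<notin> D" using h \<open>r \<noteq> r'\<close> tableau_at_col_even[OF local, of r' c r] by auto
    ultimately show False using h same col_even_unique by metis
  qed
qed

end

section \<open>The operator \<open>e\<^sub>i\<close>\<close>

locale unbracketed_box = tableau +
  fixes i r c :: nat
  assumes i_pos: "1 \<le> i" and e_box_y: "e_box lam mu i T = Some (r, c)"
begin

lemma y_box: "(r, c) \<in> boxes lam mu" and y_entry: "T (r, c) = unp (Suc i)"
  using e_box_entry[OF e_box_y] by simp_all

lemma east_of_y: "(r, Suc c) \<in> boxes lam mu \<Longrightarrow> unp (Suc i) \<le> T (r, Suc c)"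
  using row_step[OF y_box] y_entry by simp

lemma south_of_y: "(Suc r, c) \<in> boxes lam mu \<Longrightarrow> unp (Suc i) \<le> T (Suc r, c)"
  using col_step[OF y_box] y_entry by simp

lemma north_of_y: "0 < r \<Longrightarrow> (r - 1, c) \<in> boxes lam mu \<Longrightarrow> T (r - 1, c) \<le> prm (Suc i)"
  using above_unprimed[of "r - 1" c "Suc i"] y_entry by (simp add: unp_def prm_def)

lemma cN_le: "cN T (r, c) \<le> prm (Suc i)"
  using north_of_y zero_outside[of "(r - 1, c)"]
  by (cases "0 < r"; cases "(r - 1, c) \<in> boxes lam mu") (auto simp: cN_def)

lemma cW_le: "cW T (r, c) \<le> prm (Suc i)"
proof (cases "0 < c \<and> (r, c - 1) \<in> boxes lam mu")
  case True
  then have "T (r, c - 1) \<le> unp (Suc i)" "T (r, c - 1) \<noteq> unp (Suc i)"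
    using row_mono[OF _ y_box, of "c - 1"] y_entry e_box_west_not_unprimed[OF e_box_y] by simp_all
  with True show ?thesis by (simp add: cW_def unp_def prm_def)
next
  case False
  then show ?thesis using zero_outside[of "(r, c - 1)"] by (auto simp: cW_def)
qed

lemma northwest_of_unprimed_eq:
  assumes "T (Suc a, x) = unp (Suc i)" "(a, x') \<in> boxes lam mu" "x' < x" "unp i \<le> T (a, x')"
  shows "(a, x - 1) \<in> boxes lam mu" and "T (a, x - 1) = unp i"
proof -
  have "(Suc a, x) \<in> boxes lam mu" using assms(1) by (intro box_if_nonzero) (simp add: unp_def)
  then show box: "(a, x - 1) \<in> boxes lam mu" using convex[OF assms(2)] assms(3) by simp
  have "T (a, x') \<le> T (a, x - 1)" using row_mono[OF assms(2) box] assms(3) by simp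
  with northwest_of_unprimed[OF assms(1) box] assms(3,4) show "T (a, x - 1) = unp i" by simp
qed

lemma between_unprimed_row_bounds:
  assumes "z \<in> between_boxes lam mu T (unp (Suc i)) (r, c) (a, b)" "T (a, b) = unp i"
    and "(a, b) \<in> boxes lam mu"
  shows "a < fst z" and "fst z \<le> r" and "fst z = r \<Longrightarrow> c < snd z"
proof -
  obtain a' x where z: "z = (a', x)" by fastforce
  from assms(1) have zb: "(a', x) \<in> boxes lam mu" and entry: "T (a', x) = unp (Suc i)"
    and after: "read_before (r, c) (a', x)" and upto: "(a', x) = (a, b) \<or> read_before (a', x) (a, b)"
    unfolding between_boxes_def z by auto
  have "a' \<noteq> a"
  proof
    assume "a' = a"
    with upto have "x \<le> b" by (auto simp: read_before_def)
    with \<open>a' = a\<close> row_mono[OF zb] assms(3) have "T (a', x) \<le> T (a, b)" by simp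
    with entry assms(2) show False by (simp add: unp_def)
  qed
  with upto show "a < fst z" unfolding z by (auto simp: read_before_def)
  from after show "fst z \<le> r" "fst z = r \<Longrightarrow> c < snd z" unfolding z by (auto simp: read_before_def)
qed

lemma no_injection_into_between:
  assumes "f ` between_boxes lam mu T (unp (Suc i)) (r, c) t
      \<subseteq> between_boxes lam mu T (unp i) (r, c) t - {u}"
    and "inj_on f (between_boxes lam mu T (unp (Suc i)) (r, c) t)"
    and "u \<in> between_boxes lam mu T (unp i) (r, c) t"
  shows False
proof -
  let ?J = "between_boxes lam mu T (unp (Suc i)) (r, c) t"
  let ?I = "between_boxes lam mu T (unp i) (r, c) t"
  have "finite ?I" by (rule finite_subset[OF _ finite_boxes]) (auto simp: between_boxes_def)
  have "card ?J = card (f ` ?J)" using assms(2) by (simp add: card_image)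
  also have "\<dots> \<le> card (?I - {u})" using assms(1) \<open>finite ?I\<close> by (intro card_mono) auto
  also have "\<dots> < card ?I" using \<open>finite ?I\<close> assms(3) by (rule card_Diff1_less)
  finally show False using e_box_balance[OF e_box_y, of t] by simp
qed

text \<open>If the \<open>j'\<close> west of \<open>y\<close> had an \<open>i\<close> above it, each \<open>j\<close> read after \<open>y\<close> in row \<open>r\<close>
  would have an \<open>i\<close> north-west of it, and these together with the \<open>i\<close> above the \<open>j'\<close> would
  bracket all of them.\<close>

lemma northwest_of_west_not_i:
  assumes "0 < c" "0 < r" "T (r, c - 1) = prm (Suc i)"
  shows "T (r - 1, c - 1) \<noteq> unp i"
proof
  assume nw: "T (r - 1, c - 1) = unp i"
  obtain a where r: "r = Suc a" using assms(2) gr0_conv_Suc by auto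
  have nw_box: "(a, c - 1) \<in> boxes lam mu"
    using nw r i_pos by (intro box_if_nonzero) (simp add: unp_def)
  define E where "E = {x. (a, x) \<in> boxes lam mu \<and> T (a, x) = unp i}"
  have "finite E" unfolding E_def
    by (rule finite_subset[OF _ finite_imageI[OF finite_boxes, of snd]]) force
  have "c - 1 \<in> E" using nw_box nw r unfolding E_def by simp
  define e where "e = Max E"
  have e: "e \<in> E" and e_max: "\<And>x. x \<in> E \<Longrightarrow> x \<le> e"
    using \<open>finite E\<close> \<open>c - 1 \<in> E\<close> unfolding e_def by (auto intro: Max_in)
  let ?J = "between_boxes lam mu T (unp (Suc i)) (r, c) (a, e)"
  let ?I = "between_boxes lam mu T (unp i) (r, c) (a, e)"
  have J_row: "fst z = r \<and> c < snd z" if "z \<in> ?J" for z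
    using between_unprimed_row_bounds[OF that] e r unfolding E_def by fastforce
  have "(\<lambda>z. (a, snd z - 1)) ` ?J \<subseteq> ?I - {(a, c - 1)}"
  proof
    fix w assume "w \<in> (\<lambda>z. (a, snd z - 1)) ` ?J"
    then obtain x where x: "(r, x) \<in> ?J" "c < x" and w: "w = (a, x - 1)"
      using J_row by fastforce
    have "T (Suc a, x) = unp (Suc i)" using x(1) r by (simp add: between_boxes_def)
    from northwest_of_unprimed_eq[OF this nw_box] x(2) nw r
    have "(a, x - 1) \<in> boxes lam mu" "T (a, x - 1) = unp i" by auto
    moreover from this have "x - 1 \<le> e" using e_max unfolding E_def by simp
    ultimately show "w \<in> ?I - {(a, c - 1)}"
      using x(2) w r assms(1) by (auto simp: between_boxes_def read_before_def)
  qed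
  moreover have "inj_on (\<lambda>z. (a, snd z - 1)) ?J"
  proof (rule inj_onI)
    fix z z' assume "z \<in> ?J" "z' \<in> ?J" "(a, snd z - 1) = (a, snd z' - 1)"
    with J_row[of z] J_row[of z'] show "z = z'" by (simp add: prod_eq_iff) linarith
  qed
  moreover have "(a, c - 1) \<in> ?I"
    using nw_box nw r e_max[OF \<open>c - 1 \<in> E\<close>] by (auto simp: between_boxes_def read_before_def)
  ultimately show False by (rule no_injection_into_between)
qed

lemma ribbon_crossing_witness:
  assumes "T (r - 1, c) \<in> {unp i, prm (Suc i)}" "rib_reach T i (r - 1, c) (a, b)"
    and "a < a'" "a' \<le> r" "a' = r \<Longrightarrow> c < x" "T (a', x) = unp (Suc i)"
  shows "\<exists>x'. x' < x \<and> (a' - 1, x') \<in> boxes lam mu \<and> unp i \<le> T (a' - 1, x')"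
proof (cases "a' = r")
  case True
  with assms(1,5) show ?thesis
    using rib_reach_box[OF i_pos rib_reach.start assms(1)]
    by (intro exI[of _ c]) (auto simp: unp_def prm_def)
next
  case False
  with assms(3,4) have "fst (a, b) \<le> a' - 1" "a' - 1 < fst (r - 1, c)" by auto
  from rib_reach_crosses_row[OF assms(2) this] obtain x' where
    x': "rib_reach T i (r - 1, c) (Suc (a' - 1), x')" "rib_reach T i (r - 1, c) (a' - 1, x')"
      by blast
  have a': "Suc (a' - 1) = a'" using assms(3) by simp
  have "x' < x"
  proof (rule ccontr)
    assume "\<not> x' < x"
    have "(a', x) \<in> boxes lam mu" using assms(6) by (intro box_if_nonzero) (simp add: unp_def)
    then have "T (a', x) \<le> T (a', x')"
      using row_mono rib_reach_box[OF i_pos x'(1) assms(1)] a' \<open>\<not> x' < x\<close> by simp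
    with rib_reach_entry[OF x'(1) assms(1)] assms(6) a' show False by (auto simp: unp_def prm_def)
  qed
  with rib_reach_box[OF i_pos x'(2) assms(1)] rib_reach_entry[OF x'(2) assms(1)] show ?thesis
    by (intro exI[of _ x']) (auto simp: unp_def prm_def)
qed

lemma ribbon_end_i_right_bound:
  assumes "T (a, b) = unp i" "\<nexists>q. rib_step T i (a, b) q" "(a, b) \<in> boxes lam mu"
    and "(a, x) \<in> boxes lam mu" "T (Suc a, x) = unp (Suc i)"
  shows "x \<le> b"
proof (rule ccontr)
  assume "\<not> x \<le> b"
  then have east: "(a, Suc b) \<in> boxes lam mu" using convex[OF assms(3,4)] by simp
  have "T (a, Suc b) \<notin> {unp i, prm (Suc i)}" using assms(2) by (auto simp: rib_step_def)
  moreover have "unp i \<le> T (a, Suc b)" using row_step[OF assms(3) east] assms(1) by simp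
  moreover have "T (a, Suc b) \<le> T (a, x)" using row_mono[OF east assms(4)] \<open>\<not> x \<le> b\<close> by simp
  moreover have "T (a, x) < unp (Suc i)" using above_unprimed[OF assms(5,4)] by simp
  ultimately show False by (auto simp: unp_def prm_def)
qed

text \<open>If the ribbon ended in an \<open>i\<close>, the \<open>i\<close>'s sitting north-west of the \<open>j\<close>'s read between
  \<open>y\<close> and the ribbon end, together with the ribbon end itself, would bracket all these \<open>j\<close>'s.\<close>

lemma ribbon_end_not_i:
  assumes "0 < r" "T (r - 1, c) \<in> {unp i, prm (Suc i)}"
  shows "T (rib_end T i (r - 1, c)) \<noteq> unp i"
proof
  obtain a b where p: "rib_end T i (r - 1, c) = (a, b)" by fastforce
  assume "T (rib_end T i (r - 1, c)) = unp i"
  with p have p_entry: "T (a, b) = unp i" by simp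
  have reach: "rib_reach T i (r - 1, c) (a, b)" and p_end: "\<nexists>q. rib_step T i (a, b) q"
    using rib_end_spec[OF i_pos assms(2)] p by simp_all
  have p_box: "(a, b) \<in> boxes lam mu" and "a < r"
    using rib_reach_box[OF i_pos reach assms(2)] rib_reach_row_le[OF reach] assms(1) by auto
  let ?J = "between_boxes lam mu T (unp (Suc i)) (r, c) (a, b)"
  let ?I = "between_boxes lam mu T (unp i) (r, c) (a, b)"
  let ?f = "\<lambda>z. (fst z - 1, snd z - 1)"
  have key: "0 < snd z \<and> ?f z \<in> ?I - {(a, b)}" if z: "z \<in> ?J" for z
  proof -
    obtain a' x where z': "z = (a', x)" by fastforce
    have a': "a < a'" "a' \<le> r" "a' = r \<Longrightarrow> c < x" "Suc (a' - 1) = a'"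
      using between_unprimed_row_bounds[OF z p_entry p_box] z' by auto
    have j: "T (Suc (a' - 1), x) = unp (Suc i)" using z z' a'(4) by (simp add: between_boxes_def)
    obtain x' where x': "x' < x" "(a' - 1, x') \<in> boxes lam mu" "unp i \<le> T (a' - 1, x')"
      using ribbon_crossing_witness[OF assms(2) reach a'(1-3)] j a'(4) by auto
    note nw = northwest_of_unprimed_eq[OF j x'(2,1,3)]
    have "x \<le> b" if "a' - 1 = a"
      using ribbon_end_i_right_bound[OF p_entry p_end p_box] convex[OF nw(1)] j that
        box_if_nonzero[of "(a', x)"] a'(4) by (simp add: unp_def)
    with nw a'(1,2) x'(1) show ?thesis unfolding z'
      by (cases "a' - 1 = a") (auto simp: between_boxes_def read_before_def)
  qed
  have "inj_on ?f ?J"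
  proof (rule inj_onI)
    fix z z' assume "z \<in> ?J" "z' \<in> ?J" "?f z = ?f z'"
    with key[of z] key[of z'] between_unprimed_row_bounds[OF _ p_entry p_box, of z]
      between_unprimed_row_bounds[OF _ p_entry p_box, of z'] show "z = z'"
      by (simp add: prod_eq_iff) linarith
  qed
  moreover have "(a, b) \<in> ?I" using p_box p_entry \<open>a < r\<close>
    by (simp add: between_boxes_def read_before_def)
  ultimately show False using key by (intro no_injection_into_between[of ?f]) auto
qed

lemma letter_bounds: "1 \<le> unp i" "prm (Suc i) \<le> 2 * k"
  using i_pos entry_bounds[OF y_box] y_entry by (simp_all add: unp_def prm_def)

lemma tableau_at_y_case_here:
  assumes "cW T (r, c) \<le> unp i" "cN T (r, c) < unp i"
  shows "tableau_at k lam mu (T((r, c) := unp i)) r c"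
  unfolding tableau_at_def
proof (intro conjI impI allI)
  let ?T = "T((r, c) := unp i)"
  show "1 \<le> ?T (r, c)" "?T (r, c) \<le> 2 * k" using letter_bounds by (simp_all add: unp_def prm_def)
  show "?T (r, c - 1) \<le> ?T (r, c)" if "0 < c" using that assms(1) by (simp add: cW_def)
  show "?T (r, c) \<le> ?T (r, Suc c)" if "(r, Suc c) \<in> boxes lam mu"
    using east_of_y[OF that] by (simp add: unp_def)
  show "?T (r - 1, c) \<le> ?T (r, c)" if "0 < r" using that assms(2) by (simp add: cN_def)
  show "?T (r, c) \<le> ?T (Suc r, c)" if "(Suc r, c) \<in> boxes lam mu"
    using south_of_y[OF that] by (simp add: unp_def)
  show "?T (r, x) \<noteq> ?T (r, c)" if "odd (?T (r, c))" for x
    using that by (simp add: unp_def)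
  show "?T (a, c) \<noteq> ?T (r, c)" if "(a, c) \<in> boxes lam mu" "a \<noteq> r" for a
  proof (cases "a < r")
    case True
    then have "(r - 1, c) \<in> boxes lam mu" using convex[OF that(1) y_box] by simp
    with True that(1) have "T (a, c) \<le> T (r - 1, c)" by (intro col_mono) auto
    with True that(2) assms(2) show ?thesis by (simp add: cN_def)
  next
    case False
    with that have "T (r, c) \<le> T (a, c)" using col_mono[OF y_box] by simp
    with that(2) y_entry show ?thesis by (simp add: unp_def)
  qed
qed

lemma tableau_at_y_case_west:
  assumes "0 < c" "T (r, c - 1) = prm (Suc i)"
  shows "tableau_at k lam mu (T((r, c) := prm (Suc i), (r, c - 1) := unp i)) r c"
  unfolding tableau_at_def
proof (intro conjI impI allI)
  let ?T = "T((r, c) := prm (Suc i), (r, c - 1) := unp i)"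
  obtain c0 where c [simp]: "c = Suc c0" using assms(1) gr0_conv_Suc by blast
  have west_box: "(r, c - 1) \<in> boxes lam mu" using assms(2)
    by (intro box_if_nonzero) (simp add: prm_def)
  show "1 \<le> ?T (r, c)" "?T (r, c) \<le> 2 * k" using letter_bounds assms(1)
    by (simp_all add: unp_def prm_def)
  show "?T (r, c - 1) \<le> ?T (r, c)" using assms(1) by (simp add: unp_def prm_def)
  show "?T (r, c) \<le> ?T (r, Suc c)" if "(r, Suc c) \<in> boxes lam mu"
    using east_of_y[OF that] assms(1) by (simp add: unp_def prm_def)
  show "?T (r - 1, c) \<le> ?T (r, c)" if "0 < r" "(r - 1, c) \<in> boxes lam mu"
    using north_of_y[OF that] that(1) assms(1) by simp
  show "?T (r, c) \<le> ?T (Suc r, c)" if "(Suc r, c) \<in> boxes lam mu"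
    using south_of_y[OF that] assms(1) by (simp add: unp_def prm_def)
  show "?T (r, x) \<noteq> ?T (r, c)" if "(r, x) \<in> boxes lam mu" "x \<noteq> c" for x
  proof (cases "x = c - 1")
    case False
    have "T (r, x) \<noteq> T (r, c - 1)"
      using row_odd_unique[OF that(1) west_box] assms(2) False by (auto simp: prm_def)
    with False that(2) assms show ?thesis by simp
  qed (use assms(1) in \<open>simp add: unp_def prm_def\<close>)
  show "?T (a, c) \<noteq> ?T (r, c)" if "even (?T (r, c))" for a
    using that assms(1) by (simp add: prm_def)
qed

lemma tableau_at_west_case_west:
  assumes "0 < c" "T (r, c - 1) = prm (Suc i)"
  shows "tableau_at k lam mu (T((r, c) := prm (Suc i), (r, c - 1) := unp i)) r (c - 1)"
  unfolding tableau_at_def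
proof (intro conjI impI allI)
  let ?T = "T((r, c) := prm (Suc i), (r, c - 1) := unp i)"
  obtain c0 where c [simp]: "c = Suc c0" using assms(1) gr0_conv_Suc by blast
  have west_box: "(r, c - 1) \<in> boxes lam mu" using assms(2)
    by (intro box_if_nonzero) (simp add: prm_def)
  show "1 \<le> ?T (r, c - 1)" "?T (r, c - 1) \<le> 2 * k" using letter_bounds
    by (simp_all add: unp_def prm_def)
  show "?T (r, c - 1 - 1) \<le> ?T (r, c - 1)" if "0 < c - 1" "(r, c - 1 - 1) \<in> boxes lam mu"
  proof -
    have "T (r, c - 1 - 1) \<le> T (r, c - 1)" using row_mono[OF that(2) west_box] by simp
    moreover have "T (r, c - 1 - 1) \<noteq> T (r, c - 1)"
      using row_odd_unique[OF that(2) west_box] assms(2) that(1) by (auto simp: prm_def)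
    ultimately show ?thesis using that(1) assms(2) by (simp add: unp_def prm_def)
  qed
  show "?T (r, c - 1) \<le> ?T (r, Suc (c - 1))" using assms(1) by (simp add: unp_def prm_def)
  show "?T (r - 1, c - 1) \<le> ?T (r, c - 1)" if "0 < r" "(r - 1, c - 1) \<in> boxes lam mu"
    using northwest_of_unprimed[of "r - 1" c i] y_entry that assms(1) by simp
  show "?T (r, c - 1) \<le> ?T (Suc r, c - 1)" if "(Suc r, c - 1) \<in> boxes lam mu"
    using col_step[OF west_box that] assms by (simp add: unp_def prm_def)
  show "?T (r, x) \<noteq> ?T (r, c - 1)" if "odd (?T (r, c - 1))" for x
    using that by (simp add: unp_def)
  show "?T (a, c - 1) \<noteq> ?T (r, c - 1)" if "(a, c - 1) \<in> boxes lam mu" "a \<noteq> r" for a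
  proof (cases "a < r")
    case True
    then have nw_box: "(r - 1, c - 1) \<in> boxes lam mu" using convex[OF that(1) west_box] by simp
    with True that(1) have "T (a, c - 1) \<le> T (r - 1, c - 1)" by (intro col_mono) auto
    moreover have "T (r - 1, c - 1) \<le> unp i"
      using northwest_of_unprimed[of "r - 1" c i] y_entry nw_box True assms(1) by simp
    moreover have "T (r - 1, c - 1) \<noteq> unp i"
      using northwest_of_west_not_i[OF assms(1) _ assms(2)] True by simp
    ultimately show ?thesis using that(2) by simp
  next
    case False
    with that have "T (r, c - 1) \<le> T (a, c - 1)" using col_mono[OF west_box] by simp
    with that(2) assms(2) show ?thesis by (simp add: unp_def prm_def)
  qed
qed

lemma ribbon_end_facts:
  assumes "0 < r" "T (r - 1, c) \<in> {unp i, prm (Suc i)}" "rib_end T i (r - 1, c) = (a, b)"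
  shows "T (a, b) = prm (Suc i)" and "(a, b) \<in> boxes lam mu" and "a < r"
    and "0 < a \<Longrightarrow> T (a - 1, b) \<notin> {unp i, prm (Suc i)}"
proof -
  have reach: "rib_reach T i (r - 1, c) (a, b)" and "\<nexists>q. rib_step T i (a, b) q"
    using rib_end_spec[OF i_pos assms(2)] assms(3) by simp_all
  then show "0 < a \<Longrightarrow> T (a - 1, b) \<notin> {unp i, prm (Suc i)}"
    using rib_step_exists_iff[of T i a b] by blast
  show "T (a, b) = prm (Suc i)"
    using rib_reach_entry[OF reach assms(2)] ribbon_end_not_i[OF assms(1,2)] assms(3) by auto
  show "(a, b) \<in> boxes lam mu" "a < r"
    using rib_reach_box[OF i_pos reach assms(2)] rib_reach_row_le[OF reach] assms(1) by auto
qed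

lemma tableau_at_y_case_ribbon:
  assumes "cW T (r, c) \<le> unp i" "0 < r" "T (r - 1, c) \<in> {unp i, prm (Suc i)}"
    and "rib_end T i (r - 1, c) = (a, b)"
  shows "tableau_at k lam mu (T((r, c) := prm (Suc i), (a, b) := unp i)) r c"
  unfolding tableau_at_def
proof (intro conjI impI allI)
  let ?T = "T((r, c) := prm (Suc i), (a, b) := unp i)"
  have "a < r" using ribbon_end_facts[OF assms(2-4)] by simp
  then have [simp]: "a \<noteq> r" "r \<noteq> a" "Suc r \<noteq> a" by simp_all
  show "1 \<le> ?T (r, c)" "?T (r, c) \<le> 2 * k" using letter_bounds by (simp_all add: prm_def)
  show "?T (r, c - 1) \<le> ?T (r, c)" if "0 < c" using that assms(1)
    by (simp add: cW_def unp_def prm_def)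
  show "?T (r, c) \<le> ?T (r, Suc c)" if "(r, Suc c) \<in> boxes lam mu"
    using east_of_y[OF that] by (simp add: unp_def prm_def)
  show "?T (r - 1, c) \<le> ?T (r, c)"
    using assms(2,3) by (cases "(r - 1, c) = (a, b)") (auto simp: unp_def prm_def)
  show "?T (r, c) \<le> ?T (Suc r, c)" if "(Suc r, c) \<in> boxes lam mu"
    using south_of_y[OF that] by (simp add: unp_def prm_def)
  show "?T (r, x) \<noteq> ?T (r, c)" if "(r, x) \<in> boxes lam mu" "x \<noteq> c" for x
  proof (cases "x < c")
    case True
    then have "T (r, x) \<le> T (r, c - 1)" using row_mono[OF that(1)] convex[OF that(1) y_box] by simp
    with True that(2) assms(1) show ?thesis by (simp add: cW_def unp_def prm_def)
  next
    case False
    then have "T (r, c) \<le> T (r, x)" using row_mono[OF y_box that(1)] by simp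
    with that(2) y_entry show ?thesis by (simp add: unp_def prm_def)
  qed
  show "?T (a', c) \<noteq> ?T (r, c)" if "even (?T (r, c))" for a'
    using that by (simp add: prm_def)
qed

lemma tableau_at_end_case_ribbon:
  assumes "0 < r" "T (r - 1, c) \<in> {unp i, prm (Suc i)}" "rib_end T i (r - 1, c) = (a, b)"
  shows "tableau_at k lam mu (T((r, c) := prm (Suc i), (a, b) := unp i)) a b"
  unfolding tableau_at_def
proof (intro conjI impI allI)
  let ?T = "T((r, c) := prm (Suc i), (a, b) := unp i)"
  note p = ribbon_end_facts[OF assms]
  then have [simp]: "a \<noteq> r" "r \<noteq> a" by simp_all
  show "1 \<le> ?T (a, b)" "?T (a, b) \<le> 2 * k" using letter_bounds by (simp_all add: unp_def prm_def)
  show "?T (a, b - 1) \<le> ?T (a, b)" if "0 < b" "(a, b - 1) \<in> boxes lam mu"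
  proof -
    have "T (a, b - 1) \<le> T (a, b)" using row_mono[OF that(2) p(2)] by simp
    moreover have "T (a, b - 1) \<noteq> T (a, b)"
      using row_odd_unique[OF that(2) p(2)] p(1) that(1) by (auto simp: prm_def)
    ultimately show ?thesis using that(1) p(1) by (simp add: unp_def prm_def)
  qed
  show "?T (a, b) \<le> ?T (a, Suc b)" if "(a, Suc b) \<in> boxes lam mu"
    using row_step[OF p(2) that] p(1) by (simp add: unp_def prm_def)
  show "?T (a - 1, b) \<le> ?T (a, b)" if "0 < a" "(a - 1, b) \<in> boxes lam mu"
    using col_mono[OF that(2) p(2)] p(1,3) p(4)[OF that(1)] that(1) by (auto simp: unp_def prm_def)
  show "?T (a, b) \<le> ?T (Suc a, b)" if "(Suc a, b) \<in> boxes lam mu"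
    using col_step[OF p(2) that] p(1) by (cases "(Suc a, b) = (r, c)") (auto simp: unp_def prm_def)
  show "?T (a, x) \<noteq> ?T (a, b)" if "odd (?T (a, b))" for x
    using that by (simp add: unp_def)
  show "?T (a', b) \<noteq> ?T (a, b)" if "(a', b) \<in> boxes lam mu" "a' \<noteq> a" for a'
  proof (cases "a' < a")
    case True
    then have "(a - 1, b) \<in> boxes lam mu" using convex[OF that(1) p(2)] by simp
    with True that(1) have "T (a', b) \<le> T (a - 1, b)" by (intro col_mono) auto
    moreover have "T (a - 1, b) \<le> T (a, b)" using col_mono[OF \<open>(a - 1, b) \<in> _\<close> p(2)] by simp
    ultimately show ?thesis using True that(2) p(1) p(4) \<open>a < r\<close> by (auto simp: unp_def prm_def)
  next
    case False
    then have "T (a, b) \<le> T (a', b)" using col_mono[OF p(2) that(1)] that(2) by simp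
    with that(2) p(1) show ?thesis by (cases "(a', b) = (r, c)") (auto simp: unp_def prm_def)
  qed
qed

lemma e_op_cases:
  defines "p \<equiv> p_box T i (r, c)"
  shows "p = (r, c) \<and> primed_tableau k lam mu (T((r, c) := unp i)) \<or>
    p \<noteq> (r, c) \<and> T p = prm (Suc i) \<and> primed_tableau k lam mu (T((r, c) := prm (Suc i), p := unp i))"
proof -
  consider (here) "cW T (r, c) \<le> unp i" "cN T (r, c) < unp i"
    | (west) "cW T (r, c) = prm (Suc i)"
    | (ribbon) "cW T (r, c) \<le> unp i" "cN T (r, c) \<in> {unp i, prm (Suc i)}" "\<not> cN T (r, c) < unp i"
    using cW_le cN_le by (fastforce simp: unp_def prm_def)
  then show ?thesis
  proof cases
    case here
    then have "p = (r, c)" unfolding p_def p_box_def by simp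
    moreover have "primed_tableau k lam mu (T((r, c) := unp i))"
      using tableau_at_y_case_here[OF here] y_box
      by (intro primed_tableau_update[of "{(r, c)}"]) auto
    ultimately show ?thesis by simp
  next
    case west
    then have c: "0 < c" and w: "T (r, c - 1) = prm (Suc i)"
      by (auto simp: cW_def prm_def split: if_splits)
    have "p = (r, c - 1)" using west unfolding p_def p_box_def by (simp add: unp_def prm_def)
    moreover have "(r, c - 1) \<in> boxes lam mu" using w by (intro box_if_nonzero) (simp add: prm_def)
    then have "primed_tableau k lam mu (T((r, c) := prm (Suc i), (r, c - 1) := unp i))"
      using tableau_at_y_case_west[OF c w] tableau_at_west_case_west[OF c w] y_box
      by (intro primed_tableau_update[of "{(r, c), (r, c - 1)}"]) auto
    ultimately show ?thesis using c w by auto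
  next
    case ribbon
    then have r: "0 < r" and N: "T (r - 1, c) \<in> {unp i, prm (Suc i)}"
      using i_pos by (auto simp: cN_def unp_def split: if_splits)
    obtain a b where ab: "rib_end T i (r - 1, c) = (a, b)" by fastforce
    have "p = (a, b)" using ribbon ab unfolding p_def p_box_def by (auto simp: unp_def prm_def)
    moreover note end_facts = ribbon_end_facts[OF r N ab]
    moreover have "primed_tableau k lam mu (T((r, c) := prm (Suc i), (a, b) := unp i))"
     
        using tableau_at_y_case_ribbon[OF ribbon(1) r N ab] tableau_at_end_case_ribbon[OF r N ab]
          y_box end_facts(2)
      by (intro primed_tableau_update[of "{(r, c), (a, b)}"]) auto
    ultimately show ?thesis by auto
  qed
qed

end

theorem lemma3p3:
  fixes k i :: nat and lam mu :: "nat list" and T T' :: "nat \<times> nat \<Rightarrow> nat"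
    and y p :: "nat \<times> nat"
  assumes "primed_tableau k lam mu T"
    and "1 \<le> i" and "i \<le> k - 1"
    and "e_op lam mu i T = Some T'"
    and "e_box lam mu i T = Some y"
    and "p = p_box T i y"
  shows "((p = y \<and> T y = unp (Suc i) \<and> T' = T(y := unp i))
          \<or> (p \<noteq> y \<and> T y = unp (Suc i) \<and> T p = prm (Suc i)
              \<and> T' = T(y := prm (Suc i), p := unp i)))
         \<and> primed_tableau k lam mu T'"
proof -
  obtain r c where y: "y = (r, c)" by fastforce
  interpret unbracketed_box k lam mu T i r c
    using assms(1,2,5) y by unfold_locales simp_all
  have "T' = T(y := T y - 1, p := (T(y := T y - 1)) p - 1)"
    using assms(4-6) by (simp add: e_op_def Let_def)
  moreover have "T y - 1 = prm (Suc i)" "prm (Suc i) - 1 = unp i"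
    using y y_entry by (simp_all add: unp_def prm_def)
  ultimately show ?thesis
    using e_op_cases y y_entry assms(6) by auto
qed

end
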